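(* Let $a>1$ and $c>0$. There is a constant $C=C(c,a)>0$ such that $$\sup_{B(0,1)} f\ge -C$$ for every $f\in\mathcal{R}_a$.
   Context: $\mathbb{R}^n$ is identified with the real points of $\mathbb{C}^n$; $B(0,1)$ is the unit Euclidean ball of $\mathbb{R}^n$ and $B_c(0,\rho)$ the Euclidean ball of radius $\rho$ in $\mathbb{C}^n$. $\mathcal{R}_a$ (depending on $a$ and the constant $c$) is the family of continuous plurisubharmonic functions $f:B_c(0,a)\to\mathbb{R}$ satisfying $\sup_{B_c(0,a)}f=0$ and $\sup_{B_c(0,1)}f\ge -c\log a$. *)

theory Defs
  imports "HOL-Analysis.Analysis"
begin

text \<open>A continuous (hence upper semicontinuous) f is plurisubharmonic iff it satisfies the
  sub-mean value inequality on every closed complex disc z + D w contained in the domain.\<close>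
definition cont_psh_on :: "(complex^'n) set \<Rightarrow> (complex^'n \<Rightarrow> real) \<Rightarrow> bool" where
  "cont_psh_on \<Omega> f \<longleftrightarrow> open \<Omega> \<and> continuous_on \<Omega> f \<and>
     (\<forall>z w. (\<forall>u::complex. norm u \<le> 1 \<longrightarrow> z + u *s w \<in> \<Omega>) \<longrightarrow>
        f z \<le> integral {0..2*pi} (\<lambda>t. f (z + exp (\<i> * of_real t) *s w)) / (2*pi))"

definition real_points :: "(complex^'n) set" where
  "real_points = {x. \<forall>i. Im (x $ i) = 0}"

definition R_family :: "real \<Rightarrow> real \<Rightarrow> (complex^'n \<Rightarrow> real) set" where
  "R_family c a = {f. cont_psh_on (ball 0 a) f
      \<and> (SUP z\<in>ball 0 a. ereal (f z)) = 0
      \<and> (SUP z\<in>ball 0 1. ereal (f z)) \<ge> ereal (- c * ln a)}"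

end

theory Submission
  imports Defs "HOL-Complex_Analysis.Complex_Analysis"
begin

text \<open>
  Take z in the unit ball with f z > - c ln a - 1 and write z = X + i Y with X, Y real. With e the
  unit vector along Y, b the component of X orthogonal to e and \<rho> = sqrt (1 - |b|^2), the
  complex line L \<xi> = b + \<xi> \<rho> e satisfies |L \<xi>|^2 = |b|^2 + \<rho>^2 |\<xi>|^2. Hence L
  maps the disc of radius a into the ball of radius a, the real diameter (-1, 1) into the real points
  of the unit ball, and some p in the upper half of the unit disc to z; so g = f \<circ> L is
  continuous, subharmonic and \<le> 0 on the disc of radius a. If f \<le> m < 0 on the real points
  of the unit ball, compare g with m times the harmonic measure \<omega> of [-1, 1] in the upper
  half-plane: the region where \<omega> exceeds its value \<kappa> at i s, s = (1 + a) / 2, is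
  bounded by (-1, 1) and a circular arc inside the disc of radius s, and the maximum principle gives
  g \<le> m (\<omega> - \<kappa>) there. As \<omega> p \<ge> 1/2, this yields
  - c ln a - 1 < m (1/2 - \<kappa>), a lower bound for m.
\<close>

section \<open>Circle means and a maximum principle\<close>

definition circle_mean :: "(complex \<Rightarrow> real) \<Rightarrow> complex \<Rightarrow> real \<Rightarrow> real" where
  "circle_mean w z r = integral {0..2*pi} (\<lambda>t. w (z + of_real r * exp (\<i> * of_real t))) / (2*pi)"

lemma holomorphic_circle_mean:
  assumes h: "h holomorphic_on cball z r" and r: "r > 0"
  shows "((\<lambda>t. h (z + of_real r * exp (\<i> * of_real t))) has_integral (2*pi) *\<^sub>R h z) {0..2*pi}"
proof -
  have "((\<lambda>u. h u / (u - z)) has_contour_integral (2 * of_real pi * \<i> * h z)) (circlepath z r)"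
    using Cauchy_integral_circlepath_simple[OF h] r by simp
  then have "((\<lambda>x. (2 * of_real pi * \<i>) * h (z + of_real r * exp (\<i> * of_real (2*pi*x))))
      has_integral (2 * of_real pi * \<i> * h z)) {0..1}"
    unfolding has_contour_integral_def
  proof (rule has_integral_eq[rotated])
    fix x :: real assume "x \<in> {0..1}"
    then have "vector_derivative (circlepath z r) (at x within {0..1})
        = 2 * pi * \<i> * r * exp (\<i> * of_real (2*pi*x))"
      by (simp add: vector_derivative_circlepath01 mult_ac)
    moreover have "circlepath z r x = z + of_real r * exp (\<i> * of_real (2*pi*x))"
      by (simp add: circlepath mult_ac)
    ultimately show "h (circlepath z r x) / (circlepath z r x - z)
        * vector_derivative (circlepath z r) (at x within {0..1})
      = (2 * of_real pi * \<i>) * h (z + of_real r * exp (\<i> * of_real (2*pi*x)))"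
      using r by simp
  qed
  then have "((\<lambda>x. h (z + of_real r * exp (\<i> * of_real (2*pi*x)))) has_integral h z) {0..1}"
    using has_integral_mult_right_iff[of "2 * of_real pi * \<i>"
        "\<lambda>x. h (z + of_real r * exp (\<i> * of_real (2*pi*x)))"] by simp
  moreover have "(\<lambda>x. x / (2*pi)) ` {0..2*pi} = {0..1::real}"
    using image_divide_atLeastAtMost[of "2*pi" 0 "2*pi"] by simp
  ultimately show ?thesis
    using has_integral_stretch_real_iff[of "2*pi" "\<lambda>t. h (z + of_real r * exp (\<i> * of_real t))" "h z" 0 "2*pi"]
    by simp
qed

lemma continuous_on_circle:
  assumes "continuous_on (sphere z r) g" "r \<ge> 0"
  shows "continuous_on S (\<lambda>t. g (z + of_real r * exp (\<i> * of_real t)))"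
  by (rule continuous_on_compose2[OF assms(1)])
     (use assms(2) in \<open>auto simp: dist_norm norm_mult intro!: continuous_intros\<close>)

lemma circle_mean_add_mean_value:
  fixes g h :: "complex \<Rightarrow> real"
  assumes "continuous_on (sphere z r) g" "r \<ge> 0"
    and h: "((\<lambda>t. h (z + of_real r * exp (\<i> * of_real t))) has_integral 2 * pi * h z) {0..2*pi}"
  shows "circle_mean (\<lambda>x. g x - k * (h x - c)) z r = circle_mean g z r - k * (h z - c)"
proof -
  have "((\<lambda>t. g (z + of_real r * exp (\<i> * of_real t))) has_integral 2 * pi * circle_mean g z r) {0..2*pi}"
    using integrable_integral[OF integrable_continuous_real[OF continuous_on_circle[OF assms(1,2)]]]
    by (simp add: circle_mean_def)
  from integral_unique[OF has_integral_diff[OF this has_integral_mult_right[OF has_integral_diff[OF h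
        has_integral_const_real[of c 0 "2*pi"]], of k]]]
  show ?thesis
    by (simp add: circle_mean_def field_simps)
qed

lemma circle_mean_ge_max_imp_eq:
  fixes w :: "complex \<Rightarrow> real"
  assumes cont: "continuous_on (sphere z r) w" and r: "r > 0"
    and le: "\<And>x. x \<in> sphere z r \<Longrightarrow> w x \<le> M" and mean: "M \<le> circle_mean w z r"
    and t: "t \<in> {0..2*pi}"
  shows "w (z + of_real r * exp (\<i> * of_real t)) = M"
proof -
  define c where "c = (\<lambda>t::real. z + of_real r * exp (\<i> * of_real t))"
  have c_sphere: "c t \<in> sphere z r" for t
    using r by (simp add: c_def dist_norm norm_mult)
  have cont_wc: "continuous_on {0..2*pi} (\<lambda>t. w (c t))"
    unfolding c_def using continuous_on_circle[OF cont] r by simp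
  define I where "I = integral {0..2*pi} (\<lambda>t. w (c t))"
  have gap: "((\<lambda>t. M - w (c t)) has_integral (2*pi*M - I)) {0..2*pi}"
    using has_integral_diff[OF has_integral_const_real[of M 0 "2*pi"]
        integrable_integral[OF integrable_continuous_real[OF cont_wc]]]
    by (simp add: I_def)
  have "2*pi*M \<le> I"
    using mean by (simp add: circle_mean_def I_def c_def field_simps)
  moreover have "0 \<le> 2*pi*M - I"
    using has_integral_nonneg[OF gap] le c_sphere by simp
  ultimately have zero: "((\<lambda>t. M - w (c t)) has_integral 0) (cbox 0 (2*pi))"
    using gap by simp
  have "M - w (c t) = 0"
  proof (rule has_integral_0_cbox_imp_0[OF _ _ zero])
    show "continuous_on (cbox 0 (2*pi)) (\<lambda>t. M - w (c t))"
      using cont_wc by (auto intro!: continuous_intros)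
    show "0 \<le> M - w (c x)" for x using le c_sphere by simp
    show "box 0 (2*pi) \<noteq> ({} :: real set)" using pi_gt_zero by (simp add: not_le)
  qed (use t in simp)
  then show ?thesis by (simp add: c_def)
qed

lemma compact_superlevel_set:
  fixes w :: "'a::heine_borel \<Rightarrow> real"
  assumes "open \<Omega>" "bounded \<Omega>" and cont: "continuous_on \<Omega> w"
    and boundary: "\<And>\<xi>. \<xi> \<in> frontier \<Omega> \<Longrightarrow> \<exists>d>0. \<forall>x\<in>\<Omega>. dist x \<xi> < d \<longrightarrow> w x < \<epsilon>"
  shows "compact {x\<in>\<Omega>. \<epsilon> \<le> w x}" (is "compact ?K")
proof -
  have "l \<in> ?K" if l: "l \<in> closure ?K" for l
  proof (rule ccontr)
    assume l_notin: "l \<notin> ?K"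
    have "\<exists>d>0. \<forall>x\<in>\<Omega>. dist x l < d \<longrightarrow> w x < \<epsilon>"
    proof (cases "l \<in> \<Omega>")
      case True
      then have "isCont w l" "w l < \<epsilon>"
        using cont \<open>open \<Omega>\<close> l_notin continuous_on_eq_continuous_at by auto
      then obtain d where "d > 0" "\<forall>x. dist x l < d \<longrightarrow> dist (w x) (w l) < \<epsilon> - w l"
        unfolding continuous_at_eps_delta by (meson diff_gt_0_iff_gt)
      then show ?thesis by (force simp: dist_real_def)
    next
      case False
      have "closure ?K \<subseteq> closure \<Omega>" by (rule closure_mono) blast
      with False l \<open>open \<Omega>\<close> have "l \<in> frontier \<Omega>"
        by (auto simp: frontier_def interior_open)
      then show ?thesis by (rule boundary)
    qed
    then show False
      using l by (force simp: closure_approachable)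
  qed
  then have "closed ?K" using closure_subset_eq by blast
  moreover have "bounded ?K" using \<open>bounded \<Omega>\<close> by (rule bounded_subset) blast
  ultimately show ?thesis by (simp add: compact_eq_bounded_closed)
qed

lemma compact_attains_topmost_sup:
  fixes w :: "complex \<Rightarrow> real"
  assumes "compact K" "K \<noteq> {}" and cont: "continuous_on K w"
  obtains x where "x \<in> K" "\<And>y. y \<in> K \<Longrightarrow> w y \<le> w x"
    "\<And>y. y \<in> K \<Longrightarrow> w y = w x \<Longrightarrow> Im y \<le> Im x"
proof -
  obtain y where y: "y \<in> K" "\<forall>x\<in>K. w x \<le> w y"
    using continuous_attains_sup[OF assms] by blast
  define S where "S = {x\<in>K. w x = w y}"
  have "closed S"
    unfolding S_def using cont \<open>compact K\<close>
    by (intro continuous_closed_preimage_constant) (auto simp: compact_imp_closed)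
  moreover have "bounded S" using compact_imp_bounded[OF \<open>compact K\<close>]
    by (rule bounded_subset) (auto simp: S_def)
  moreover have "y \<in> S" using y by (simp add: S_def)
  ultimately obtain x where "x \<in> S" "\<forall>x'\<in>S. Im x' \<le> Im x"
    using continuous_attains_sup[of S Im] continuous_on_Im[OF continuous_on_id]
    by (auto simp: compact_eq_bounded_closed)
  then show ?thesis using y that by (auto simp: S_def)
qed

lemma maximum_principle_circle_mean:
  fixes w :: "complex \<Rightarrow> real"
  assumes "open \<Omega>" "bounded \<Omega>" and cont: "continuous_on \<Omega> w"
    and boundary: "\<And>\<xi> \<epsilon>. \<xi> \<in> frontier \<Omega> \<Longrightarrow> \<epsilon> > 0 \<Longrightarrow> \<exists>d>0. \<forall>x\<in>\<Omega>. dist x \<xi> < d \<longrightarrow> w x < \<epsilon>"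
    and submean: "\<And>x r. 0 < r \<Longrightarrow> cball x r \<subseteq> \<Omega> \<Longrightarrow> w x \<le> circle_mean w x r"
    and z: "z \<in> \<Omega>"
  shows "w z \<le> 0"
proof (rule ccontr)
  assume "\<not> w z \<le> 0"
  define K where "K = {x\<in>\<Omega>. w z \<le> w x}"
  have "compact K"
    unfolding K_def using \<open>\<not> w z \<le> 0\<close> by (intro compact_superlevel_set assms) auto
  moreover have "z \<in> K" using z by (simp add: K_def)
  \<comment> \<open>Take a maximum point of greatest imaginary part; the sub-mean value inequality forces the
    maximum also at the point straight above it.\<close>
  ultimately obtain x where x: "x \<in> K" "\<And>y. y \<in> K \<Longrightarrow> w y \<le> w x"
    "\<And>y. y \<in> K \<Longrightarrow> w y = w x \<Longrightarrow> Im y \<le> Im x"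
    using compact_attains_topmost_sup[of K w] continuous_on_subset[OF cont] by (auto simp: K_def)
  have w_le: "w y \<le> w x" if "y \<in> \<Omega>" for y
    using x(1,2) that by (cases "y \<in> K") (auto simp: K_def)
  have "x \<in> \<Omega>" using x(1) by (simp add: K_def)
  then obtain r where r: "r > 0" "cball x r \<subseteq> \<Omega>"
    using open_contains_cball \<open>open \<Omega>\<close> by blast
  have "w (x + of_real r * exp (\<i> * of_real (pi/2))) = w x"
  proof (rule circle_mean_ge_max_imp_eq)
    show "continuous_on (sphere x r) w"
      using continuous_on_subset[OF cont] r sphere_cball by blast
    show "\<And>y. y \<in> sphere x r \<Longrightarrow> w y \<le> w x"
      using w_le r sphere_cball by blast
    show "w x \<le> circle_mean w x r" by (rule submean[OF r])
  qed (use r in auto)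
  moreover have "x + of_real r * exp (\<i> * of_real (pi/2)) = x + of_real r * \<i>"
    by (simp add: exp_eq_polar complex_eq_iff)
  moreover have "x + of_real r * \<i> \<in> \<Omega>"
    using r by (auto simp: dist_norm norm_mult)
  ultimately have "Im (x + of_real r * \<i>) \<le> Im x"
    using x by (intro x(3)) (auto simp: K_def)
  with r show False by simp
qed

section \<open>Harmonic measure of the segment [-1, 1]\<close>

text \<open>The angle under which [-1, 1] is seen from z, divided by pi; on the upper half-plane this is the
  harmonic function with boundary values 1 on (-1, 1) and 0 on the rest of the real line.\<close>
definition hmeasure :: "complex \<Rightarrow> real" where
  "hmeasure z = Im (Ln ((z - 1) / (z + 1))) / pi"

lemma Re_pm1_quotient: "Re ((z - 1) / (z + 1)) = ((cmod z)\<^sup>2 - 1) / (cmod (z + 1))\<^sup>2"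
  unfolding cmod_power2 by (simp add: Re_divide power2_eq_square algebra_simps)

lemma Im_pm1_quotient: "Im ((z - 1) / (z + 1)) = 2 * Im z / (cmod (z + 1))\<^sup>2"
  unfolding cmod_power2 by (simp add: Im_divide power2_eq_square algebra_simps)

lemma plus_one_neq_zero_if_Im_pos: "Im z > 0 \<Longrightarrow> z + 1 \<noteq> 0"
  by (auto simp: add_eq_0_iff2)

lemma Im_pm1_quotient_pos: "Im z > 0 \<Longrightarrow> Im ((z - 1) / (z + 1)) > 0"
  using plus_one_neq_zero_if_Im_pos by (simp add: Im_pm1_quotient)

lemma hmeasure_bounds: "Im z > 0 \<Longrightarrow> 0 < hmeasure z \<and> hmeasure z < 1"
  using Im_Ln_pos_lt_imp[OF Im_pm1_quotient_pos] by (simp add: hmeasure_def)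

lemma hmeasure_ge_half:
  assumes "Im z > 0" "cmod z \<le> 1"
  shows "1/2 \<le> hmeasure z"
proof -
  define q where "q = (z - 1) / (z + 1)"
  have "Re q \<le> 0" "Im q > 0"
    using assms by (auto simp: q_def Re_pm1_quotient Im_pm1_quotient_pos divide_nonpos_nonneg power_le_one)
  moreover from this have "q \<noteq> 0" by auto
  ultimately have "pi/2 \<le> Im (Ln q)"
    using Im_Ln_eq[of q] arctan_bounded[of "Im q / Re q"] by (cases "Re q = 0") auto
  then show ?thesis by (simp add: hmeasure_def q_def field_simps)
qed

lemma hmeasure_outside_unit_disc:
  assumes "Im z > 0" "cmod z > 1"
  shows "hmeasure z = arctan (2 * Im z / ((cmod z)\<^sup>2 - 1)) / pi"
proof -
  define q where "q = (z - 1) / (z + 1)"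
  have "z + 1 \<noteq> 0" using assms(1) by (rule plus_one_neq_zero_if_Im_pos)
  then have "Re q > 0" "Im q / Re q = 2 * Im z / ((cmod z)\<^sup>2 - 1)"
    using assms by (auto simp: q_def Re_pm1_quotient Im_pm1_quotient one_less_power)
  moreover from this have "q \<noteq> 0" by auto
  ultimately show ?thesis using Im_Ln_eq[of q] by (simp add: hmeasure_def q_def)
qed

lemma hmeasure_imaginary_axis:
  assumes "s > 1"
  shows "hmeasure (\<i> * of_real s) = arctan (2 * s / (s\<^sup>2 - 1)) / pi"
  using assms hmeasure_outside_unit_disc[of "\<i> * of_real s"] by (simp add: norm_mult)

lemma hmeasure_imaginary_axis_bounds:
  assumes "s > 1"
  shows "0 < hmeasure (\<i> * of_real s) \<and> hmeasure (\<i> * of_real s) < 1/2"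
proof -
  have "0 < arctan (2 * s / (s\<^sup>2 - 1))"
    using assms by (simp add: zero_less_arctan_iff one_less_power)
  then show ?thesis
    using assms arctan_ubound[of "2 * s / (s\<^sup>2 - 1)"] by (simp add: hmeasure_imaginary_axis)
qed

lemma holomorphic_Ln_pm1_quotient: "(\<lambda>z. Ln ((z - 1) / (z + 1))) holomorphic_on {z. Im z > 0}"
proof (rule holomorphic_on_Ln')
  show "(\<lambda>z. (z - 1) / (z + 1)) holomorphic_on {z. Im z > 0}"
    by (intro holomorphic_intros) (auto dest: plus_one_neq_zero_if_Im_pos)
  show "(z - 1) / (z + 1) \<notin> \<real>\<^sub>\<le>\<^sub>0" if "z \<in> {z. Im z > 0}" for z
    using Im_pm1_quotient_pos[of z] that by (auto simp: complex_nonpos_Reals_iff)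
qed

lemma continuous_on_hmeasure: "continuous_on {z. Im z > 0} hmeasure"
  unfolding hmeasure_def
  by (intro continuous_intros holomorphic_on_imp_continuous_on[OF holomorphic_Ln_pm1_quotient]) simp

lemma hmeasure_circle_mean:
  assumes "r > 0" "cball z r \<subseteq> {z. Im z > 0}"
  shows "((\<lambda>t. hmeasure (z + of_real r * exp (\<i> * of_real t))) has_integral 2 * pi * hmeasure z) {0..2*pi}"
proof -
  have "((\<lambda>t. Ln ((z + of_real r * exp (\<i> * of_real t) - 1) / (z + of_real r * exp (\<i> * of_real t) + 1)))
      has_integral (2*pi) *\<^sub>R Ln ((z - 1) / (z + 1))) {0..2*pi}"
    using assms holomorphic_on_subset[OF holomorphic_Ln_pm1_quotient]
    by (intro holomorphic_circle_mean) auto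
  from has_integral_divide[OF has_integral_linear[OF this bounded_linear_Im], of pi]
  show ?thesis by (simp add: hmeasure_def o_def)
qed

lemma submean_diff_hmeasure:
  assumes "continuous_on (sphere z r) g" "r > 0" "cball z r \<subseteq> {z. Im z > 0}"
    and "g z \<le> circle_mean g z r"
  shows "g z - k * (hmeasure z - c) \<le> circle_mean (\<lambda>x. g x - k * (hmeasure x - c)) z r"
  using assms circle_mean_add_mean_value[OF assms(1) _ hmeasure_circle_mean] by simp

definition hmeasure_superlevel :: "real \<Rightarrow> complex set" where
  "hmeasure_superlevel s = {z. Im z > 0 \<and> hmeasure (\<i> * of_real s) < hmeasure z}"

lemma open_hmeasure_superlevel: "open (hmeasure_superlevel s)"
proof -
  have "open ({z. Im z > 0} \<inter> hmeasure -` {hmeasure (\<i> * of_real s)<..})"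
    by (rule continuous_open_preimage[OF continuous_on_hmeasure open_halfspace_Im_gt open_greaterThan])
  then show ?thesis by (simp add: hmeasure_superlevel_def vimage_def Int_def)
qed

text \<open>The level curve of hmeasure through i s is the arc of the circle through -1, 1 and i s.\<close>
lemma hmeasure_superlevel_subset:
  assumes s: "s > 1"
  shows "hmeasure_superlevel s \<subseteq> {z. 0 \<le> Im z \<and> s * ((cmod z)\<^sup>2 - 1) \<le> (s\<^sup>2 - 1) * Im z}"
proof
  fix z assume "z \<in> hmeasure_superlevel s"
  then have z: "Im z > 0" "hmeasure (\<i> * of_real s) < hmeasure z"
    by (auto simp: hmeasure_superlevel_def)
  have "s\<^sup>2 > 1" using s by (simp add: one_less_power)
  have "s * ((cmod z)\<^sup>2 - 1) \<le> (s\<^sup>2 - 1) * Im z"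
  proof (cases "cmod z > 1")
    case True
    then have "arctan (2 * s / (s\<^sup>2 - 1)) < arctan (2 * Im z / ((cmod z)\<^sup>2 - 1))"
      using z s by (simp add: hmeasure_imaginary_axis hmeasure_outside_unit_disc divide_less_cancel)
    then have "2 * s / (s\<^sup>2 - 1) < 2 * Im z / ((cmod z)\<^sup>2 - 1)"
      by (simp add: arctan_less_iff)
    then have "s * ((cmod z)\<^sup>2 - 1) < Im z * (s\<^sup>2 - 1)"
      using True \<open>s\<^sup>2 > 1\<close> by (simp add: divide_simps one_less_power)
    then show ?thesis by (simp add: mult.commute)
  next
    case False
    then have "s * ((cmod z)\<^sup>2 - 1) \<le> 0"
      using s by (simp add: mult_nonneg_nonpos power_le_one)
    moreover have "0 \<le> (s\<^sup>2 - 1) * Im z" using z \<open>s\<^sup>2 > 1\<close> by simp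
    ultimately show ?thesis by linarith
  qed
  then show "z \<in> {z. 0 \<le> Im z \<and> s * ((cmod z)\<^sup>2 - 1) \<le> (s\<^sup>2 - 1) * Im z}"
    using z by simp
qed

lemma closure_hmeasure_superlevel:
  assumes s: "s > 1" and \<xi>: "\<xi> \<in> closure (hmeasure_superlevel s)"
  shows "cmod \<xi> \<le> s \<and> 0 \<le> Im \<xi> \<and> (Im \<xi> = 0 \<longrightarrow> cmod \<xi> \<le> 1)"
proof -
  have "closed {z. 0 \<le> Im z \<and> s * ((cmod z)\<^sup>2 - 1) \<le> (s\<^sup>2 - 1) * Im z}"
    by (intro closed_Collect_conj closed_Collect_le continuous_intros)
  then have Im_\<xi>: "0 \<le> Im \<xi>" and arc_\<xi>: "s * ((cmod \<xi>)\<^sup>2 - 1) \<le> (s\<^sup>2 - 1) * Im \<xi>"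
    using closure_minimal[OF hmeasure_superlevel_subset[OF s]] \<xi> by auto
  have "s\<^sup>2 > 1" using s by (simp add: one_less_power)
  then have "s * ((cmod \<xi>)\<^sup>2 - 1) \<le> (s\<^sup>2 - 1) * cmod \<xi>"
    using arc_\<xi> abs_Im_le_cmod[of \<xi>] by (smt (verit) mult_left_mono)
  then have "(cmod \<xi> - s) * (s * cmod \<xi> + 1) \<le> 0"
    by (simp add: algebra_simps power2_eq_square)
  moreover have "s * cmod \<xi> + 1 > 0" using s by (simp add: add_nonneg_pos)
  ultimately have "cmod \<xi> \<le> s" by (simp add: mult_le_0_iff)
  moreover have "Im \<xi> = 0 \<Longrightarrow> cmod \<xi> \<le> 1"
    using arc_\<xi> s by (simp add: mult_le_0_iff power_le_one_iff)
  ultimately show ?thesis using Im_\<xi> by blast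
qed

lemma le_at_closure_of_real_interval:
  fixes g :: "complex \<Rightarrow> real"
  assumes cont: "isCont g \<xi>" and \<xi>: "Im \<xi> = 0" "cmod \<xi> \<le> 1"
    and le: "\<And>t. \<bar>t\<bar> < 1 \<Longrightarrow> g (of_real t) \<le> m"
  shows "g \<xi> \<le> m"
proof (rule tendsto_upperbound)
  have "((\<lambda>u. of_real u * \<xi>) \<longlongrightarrow> \<xi>) (at_left 1)"
    by (auto intro!: tendsto_eq_intros)
  then show "((\<lambda>u. g (of_real u * \<xi>)) \<longlongrightarrow> g \<xi>) (at_left 1)"
    by (rule isCont_tendsto_compose[OF cont])
  have "g (of_real u * \<xi>) \<le> m" if "u \<in> {0<..<1}" for u
  proof -
    have "of_real u * \<xi> = of_real (u * Re \<xi>)" using \<xi> by (simp add: complex_eq_iff)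
    moreover have "u * \<bar>Re \<xi>\<bar> \<le> u * 1"
      using that \<xi> abs_Re_le_cmod[of \<xi>] by (intro mult_left_mono) auto
    then have "\<bar>u * Re \<xi>\<bar> < 1"
      using that by (metis abs_mult abs_of_pos greaterThanLessThan_iff mult.right_neutral
          order_le_less_trans)
    ultimately show ?thesis using le by metis
  qed
  then show "\<forall>\<^sub>F u in at_left 1. g (of_real u * \<xi>) \<le> m"
    using eventually_at_left_real[of 0 1] by (auto elim: eventually_mono)
qed (simp add: trivial_limit_at_left_real)

lemma comparison_function_at_frontier:
  fixes g :: "complex \<Rightarrow> real"
  assumes s: "1 < s" "s < a" and cont: "continuous_on (ball 0 a) g"
    and nonpos: "\<And>z. z \<in> ball 0 a \<Longrightarrow> g z \<le> 0"
    and m: "m < 0" and real_le: "\<And>t. \<bar>t\<bar> < 1 \<Longrightarrow> g (of_real t) \<le> m"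
    and \<xi>: "\<xi> \<in> frontier (hmeasure_superlevel s)" and "\<epsilon> > 0"
  shows "\<exists>d>0. \<forall>x\<in>hmeasure_superlevel s. dist x \<xi> < d \<longrightarrow>
           g x - m * (hmeasure x - hmeasure (\<i> * of_real s)) < \<epsilon>"
proof -
  define \<kappa> where "\<kappa> = hmeasure (\<i> * of_real s)"
  have \<kappa>: "0 < \<kappa>" "\<kappa> < 1/2"
    using hmeasure_imaginary_axis_bounds[OF s(1)] by (auto simp: \<kappa>_def)
  have "\<xi> \<in> closure (hmeasure_superlevel s)" "\<xi> \<notin> hmeasure_superlevel s"
    using \<xi> open_hmeasure_superlevel by (auto simp: frontier_def interior_open)
  with closure_hmeasure_superlevel[OF s(1)]
  have \<xi>_notin: "\<xi> \<notin> hmeasure_superlevel s" and "cmod \<xi> \<le> s" "0 \<le> Im \<xi>"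
    and \<xi>_real: "Im \<xi> = 0 \<Longrightarrow> cmod \<xi> \<le> 1"
    by auto
  then have "\<xi> \<in> ball 0 a" using s by simp
  then have cont_\<xi>: "isCont g \<xi>"
    using cont continuous_on_eq_continuous_at by blast
  show ?thesis
  proof (cases "Im \<xi> = 0")
    case True
    \<comment> \<open>Near a real boundary point, g < m * (1 - \<kappa>) \<le> m * (hmeasure - \<kappa>) as hmeasure < 1.\<close>
    have "g \<xi> \<le> m"
      using le_at_closure_of_real_interval[OF cont_\<xi> True \<xi>_real[OF True] real_le] .
    moreover obtain d where "d > 0" "\<forall>x. dist x \<xi> < d \<longrightarrow> dist (g x) (g \<xi>) < - m * \<kappa>"
      using cont_\<xi> \<kappa> m unfolding continuous_at_eps_delta by (meson mult_pos_pos neg_0_less_iff_less)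
    moreover have "m * (1 - \<kappa>) \<le> m * (hmeasure x - \<kappa>)" if "x \<in> hmeasure_superlevel s" for x
      using that hmeasure_bounds[of x] m by (intro mult_left_mono_neg) (auto simp: hmeasure_superlevel_def)
    ultimately show ?thesis
      using \<open>\<epsilon> > 0\<close> by (intro exI[of _ d]) (force simp: \<kappa>_def dist_real_def algebra_simps)
  next
    case False
    then have "Im \<xi> > 0" using \<open>0 \<le> Im \<xi>\<close> by simp
    then have "hmeasure \<xi> \<le> \<kappa>" "isCont hmeasure \<xi>"
      using \<xi>_notin continuous_on_hmeasure open_halfspace_Im_gt continuous_on_eq_continuous_at
      by (auto simp: hmeasure_superlevel_def \<kappa>_def)
    moreover have "0 \<le> m * (hmeasure \<xi> - \<kappa>)"
      using \<open>hmeasure \<xi> \<le> \<kappa>\<close> m by (simp add: mult_nonpos_nonpos)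
    ultimately have w_\<xi>: "g \<xi> - m * (hmeasure \<xi> - \<kappa>) \<le> 0"
      and "isCont (\<lambda>x. g x - m * (hmeasure x - \<kappa>)) \<xi>"
      using nonpos[OF \<open>\<xi> \<in> ball 0 a\<close>] cont_\<xi> by (auto intro!: continuous_intros)
    then obtain d where "d > 0"
      "\<forall>x. dist x \<xi> < d \<longrightarrow> dist (g x - m * (hmeasure x - \<kappa>)) (g \<xi> - m * (hmeasure \<xi> - \<kappa>)) < \<epsilon>"
      using \<open>\<epsilon> > 0\<close> unfolding continuous_at_eps_delta by blast
    with w_\<xi> show ?thesis
      by (intro exI[of _ d]) (force simp: \<kappa>_def dist_real_def)
  qed
qed

theorem two_constant_upper_half_disc:
  fixes g :: "complex \<Rightarrow> real"
  assumes s: "1 < s" "s < a" and cont: "continuous_on (ball 0 a) g"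
    and nonpos: "\<And>z. z \<in> ball 0 a \<Longrightarrow> g z \<le> 0"
    and submean: "\<And>z r. 0 < r \<Longrightarrow> cball z r \<subseteq> ball 0 a \<Longrightarrow> g z \<le> circle_mean g z r"
    and m: "m < 0" and real_le: "\<And>t. \<bar>t\<bar> < 1 \<Longrightarrow> g (of_real t) \<le> m"
    and p: "cmod p < 1" "0 \<le> Im p"
  shows "g p \<le> m * (1/2 - hmeasure (\<i> * of_real s))"
proof -
  define \<kappa> where "\<kappa> = hmeasure (\<i> * of_real s)"
  define \<Omega> where "\<Omega> = hmeasure_superlevel s"
  define w where "w x = g x - m * (hmeasure x - \<kappa>)" for x
  have \<kappa>: "0 < \<kappa>" "\<kappa> < 1/2"
    using hmeasure_imaginary_axis_bounds[OF s(1)] by (auto simp: \<kappa>_def)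
  show ?thesis
  proof (cases "Im p = 0")
    case True
    then have "g p \<le> m"
      using real_le[of "Re p"] p abs_Re_le_cmod[of p] by (simp add: complex_is_Real_iff)
    also have "m \<le> m * (1/2 - \<kappa>)"
      using m \<kappa> mult_left_mono_neg[of "1/2 - \<kappa>" 1 m] by simp
    finally show ?thesis by (simp add: \<kappa>_def)
  next
    case False
    have \<Omega>_upper: "\<Omega> \<subseteq> {z. Im z > 0}" by (auto simp: \<Omega>_def hmeasure_superlevel_def)
    have \<Omega>_cball: "\<Omega> \<subseteq> cball 0 s"
      using closure_hmeasure_superlevel[OF s(1)] closure_subset by (force simp: \<Omega>_def)
    then have \<Omega>_ball: "\<Omega> \<subseteq> ball 0 a" using s by auto
    have cont_w: "continuous_on \<Omega> w"
      unfolding w_def using \<Omega>_ball \<Omega>_upper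
      by (intro continuous_intros continuous_on_subset[OF cont] continuous_on_subset[OF continuous_on_hmeasure])
    have submean_w: "w x \<le> circle_mean w x r" if "0 < r" "cball x r \<subseteq> \<Omega>" for x r
      unfolding w_def[abs_def] using that \<Omega>_ball \<Omega>_upper sphere_cball
      by (intro submean_diff_hmeasure submean continuous_on_subset[OF cont]) auto
    have "1/2 \<le> hmeasure p"
      using False p hmeasure_ge_half[of p] by simp
    then have "p \<in> \<Omega>" using False p \<kappa> by (simp add: \<Omega>_def hmeasure_superlevel_def \<kappa>_def)
    have "w p \<le> 0"
    proof (rule maximum_principle_circle_mean[OF _ _ cont_w _ submean_w \<open>p \<in> \<Omega>\<close>])
      show "open \<Omega>" unfolding \<Omega>_def by (rule open_hmeasure_superlevel)
      show "bounded \<Omega>" using bounded_cball \<Omega>_cball by (rule bounded_subset)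
      show "\<exists>d>0. \<forall>x\<in>\<Omega>. dist x \<xi> < d \<longrightarrow> w x < \<epsilon>"
        if "\<xi> \<in> frontier \<Omega>" "\<epsilon> > 0" for \<xi> \<epsilon>
        using comparison_function_at_frontier[OF s cont nonpos m real_le] that
        unfolding \<Omega>_def w_def \<kappa>_def by blast
    qed
    then have "g p \<le> m * (hmeasure p - \<kappa>)" by (simp add: w_def)
    also have "\<dots> \<le> m * (1/2 - \<kappa>)"
      using \<open>1/2 \<le> hmeasure p\<close> m by (intro mult_left_mono_neg) auto
    finally show ?thesis by (simp add: \<kappa>_def)
  qed
qed

section \<open>Restriction to complex lines\<close>

definition of_real_vec :: "real^'n \<Rightarrow> complex^'n" where
  "of_real_vec x = (\<chi> i. of_real (x $ i))"

lemma norm_of_real_vec_line: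
  "(norm (of_real_vec b + \<xi> *s of_real_vec v))\<^sup>2
     = (norm b)\<^sup>2 + 2 * Re \<xi> * (b \<bullet> v) + (cmod \<xi>)\<^sup>2 * (norm v)\<^sup>2"
proof -
  have "(norm (of_real_vec b + \<xi> *s of_real_vec v))\<^sup>2
      = (\<Sum>i\<in>UNIV. (cmod (of_real (b $ i) + \<xi> * of_real (v $ i)))\<^sup>2)"
    unfolding norm_vec_def L2_set_def by (simp add: sum_nonneg of_real_vec_def)
  also have "\<dots> = (\<Sum>i\<in>UNIV. (b $ i)\<^sup>2 + 2 * Re \<xi> * (b $ i * v $ i) + (cmod \<xi>)\<^sup>2 * (v $ i)\<^sup>2)"
    unfolding cmod_power2 by (intro sum.cong refl) (simp add: power2_eq_square algebra_simps)
  also have "\<dots> = (norm b)\<^sup>2 + 2 * Re \<xi> * (b \<bullet> v) + (cmod \<xi>)\<^sup>2 * (norm v)\<^sup>2"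
    unfolding power2_norm_eq_inner inner_vec_def
    by (simp add: sum.distrib sum_distrib_left power2_eq_square)
  finally show ?thesis .
qed

lemma orthonormal_line_in_ball:
  assumes "b \<bullet> v = 0" "(norm b)\<^sup>2 + (norm v)\<^sup>2 = 1" "v \<noteq> 0" "1 \<le> r" "cmod \<xi> < r"
  shows "of_real_vec b + \<xi> *s of_real_vec v \<in> ball 0 r"
proof -
  have "(cmod \<xi>)\<^sup>2 * (norm v)\<^sup>2 < r\<^sup>2 * (norm v)\<^sup>2"
    using assms by (simp add: power_strict_mono)
  moreover have "(norm v)\<^sup>2 \<le> 1" using assms(2) by (smt (verit) zero_le_power2)
  then have "1 - (norm v)\<^sup>2 \<le> r\<^sup>2 - r\<^sup>2 * (norm v)\<^sup>2"
    using assms(4) mult_right_mono[of 1 "r\<^sup>2" "1 - (norm v)\<^sup>2"] by (simp add: algebra_simps one_le_power)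
  ultimately have "(norm (of_real_vec b + \<xi> *s of_real_vec v))\<^sup>2 < r\<^sup>2"
    using assms(1,2) by (simp add: norm_of_real_vec_line)
  then show ?thesis using assms(4) by (simp add: power2_less_imp_less)
qed

lemma obtain_unit_vector_along:
  fixes y :: "'a::euclidean_space"
  obtains e where "norm e = 1" "y = norm y *\<^sub>R e"
proof (cases "y = 0")
  case True
  then show ?thesis using that[of "SOME i. i \<in> Basis"] by simp
next
  case False
  then show ?thesis using that[of "y /\<^sub>R norm y"] by simp
qed

lemma complex_line_through_point:
  fixes z :: "complex^'n"
  assumes "z \<in> ball 0 1"
  obtains b v :: "real^'n" and p where "b \<bullet> v = 0" "(norm b)\<^sup>2 + (norm v)\<^sup>2 = 1" "v \<noteq> 0"
    "of_real_vec b + p *s of_real_vec v = z" "cmod p < 1" "0 \<le> Im p"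
proof -
  define X Y :: "real^'n" where "X = (\<chi> i. Re (z $ i))" and "Y = (\<chi> i. Im (z $ i))"
  have "z = of_real_vec X + \<i> *s of_real_vec Y"
    by (simp add: vec_eq_iff of_real_vec_def complex_eq_iff X_def Y_def)
  moreover have "(norm z)\<^sup>2 < 1" using assms by (simp add: abs_square_less_1)
  ultimately have "(norm X)\<^sup>2 + (norm Y)\<^sup>2 < 1"
    using norm_of_real_vec_line[of X \<i> Y] by simp
  obtain e where e: "norm e = 1" "Y = norm Y *\<^sub>R e" by (rule obtain_unit_vector_along)
  \<comment> \<open>z = b + ((X \<bullet> e) + \<i> norm Y) e with b real and orthogonal to e.\<close>
  define b where "b = X - (X \<bullet> e) *\<^sub>R e"
  have b_e: "b \<bullet> e = 0"
    using e(1) by (simp add: b_def inner_diff_left power2_norm_eq_inner[symmetric])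
  have "X = b + (X \<bullet> e) *\<^sub>R e" by (simp add: b_def)
  then have "(norm X)\<^sup>2 = (norm b)\<^sup>2 + (X \<bullet> e)\<^sup>2"
    using norm_add_Pythagorean[of b "(X \<bullet> e) *\<^sub>R e"] b_e e(1) by (simp add: orthogonal_def)
  define \<rho> where "\<rho> = sqrt (1 - (norm b)\<^sup>2)"
  have b_lt: "(norm b)\<^sup>2 < 1"
    using \<open>(norm X)\<^sup>2 + (norm Y)\<^sup>2 < 1\<close> \<open>(norm X)\<^sup>2 = (norm b)\<^sup>2 + (X \<bullet> e)\<^sup>2\<close>
      zero_le_power2[of "X \<bullet> e"] zero_le_power2[of "norm Y"] by linarith
  then have \<rho>: "\<rho> > 0" "\<rho>\<^sup>2 = 1 - (norm b)\<^sup>2" by (simp_all add: \<rho>_def)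
  define p where "p = Complex ((X \<bullet> e) / \<rho>) (norm Y / \<rho>)"
  show ?thesis
  proof (rule that[of b "\<rho> *\<^sub>R e" p])
    show "b \<bullet> \<rho> *\<^sub>R e = 0" using b_e by simp
    show "(norm b)\<^sup>2 + (norm (\<rho> *\<^sub>R e))\<^sup>2 = 1" using \<rho> e(1) by simp
    show "\<rho> *\<^sub>R e \<noteq> 0" using \<rho> e(1) by auto
    have "Y $ i = norm Y * e $ i" for i using arg_cong[OF e(2), of "\<lambda>v. v $ i"] by simp
    then have "(of_real_vec b + p *s of_real_vec (\<rho> *\<^sub>R e)) $ i = of_real (X $ i) + \<i> * of_real (Y $ i)"
      for i using \<rho>(1) by (simp add: complex_eq_iff of_real_vec_def p_def b_def)
    moreover have "z $ i = of_real (X $ i) + \<i> * of_real (Y $ i)" for i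
      by (simp add: complex_eq_iff X_def Y_def)
    ultimately show "of_real_vec b + p *s of_real_vec (\<rho> *\<^sub>R e) = z"
      by (simp add: vec_eq_iff)
    have "(cmod p)\<^sup>2 = ((X \<bullet> e)\<^sup>2 + (norm Y)\<^sup>2) / \<rho>\<^sup>2"
      by (simp add: p_def cmod_power2 power_divide add_divide_distrib)
    also have "\<dots> < 1"
      using \<rho> b_lt \<open>(norm X)\<^sup>2 + (norm Y)\<^sup>2 < 1\<close> \<open>(norm X)\<^sup>2 = (norm b)\<^sup>2 + (X \<bullet> e)\<^sup>2\<close>
      by (simp add: divide_less_eq)
    finally show "cmod p < 1" by (simp add: power_less_one_iff)
    show "0 \<le> Im p" using \<rho> by (simp add: p_def)
  qed
qed

lemma cont_psh_on_line_circle_mean: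
  fixes f :: "complex^'n \<Rightarrow> real"
  assumes psh: "cont_psh_on \<Omega> f" and line: "\<And>\<xi>. \<xi> \<in> D \<Longrightarrow> b + \<xi> *s v \<in> \<Omega>"
    and r: "0 < r" "cball z r \<subseteq> D"
  shows "f (b + z *s v) \<le> circle_mean (\<lambda>\<xi>. f (b + \<xi> *s v)) z r"
proof -
  have shift: "b + z *s v + u *s (of_real r *s v) = b + (z + of_real r * u) *s v" for u
    by (simp add: vec_eq_iff algebra_simps)
  have "\<forall>u. cmod u \<le> 1 \<longrightarrow> b + z *s v + u *s (of_real r *s v) \<in> \<Omega>"
    unfolding shift
  proof (intro allI impI line)
    fix u :: complex assume "cmod u \<le> 1"
    then have "z + of_real r * u \<in> cball z r"
      using r by (simp add: dist_norm norm_mult mult_le_cancel_left1)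
    then show "z + of_real r * u \<in> D" using r by blast
  qed
  then have "f (b + z *s v)
      \<le> integral {0..2*pi} (\<lambda>t. f (b + z *s v + exp (\<i> * of_real t) *s (of_real r *s v))) / (2*pi)"
    using psh unfolding cont_psh_on_def by blast
  then show ?thesis unfolding shift circle_mean_def .
qed

theorem cont_psh_two_constant:
  fixes f :: "complex^'n \<Rightarrow> real"
  assumes s: "1 < s" "s < a" and psh: "cont_psh_on (ball 0 a) f"
    and nonpos: "\<And>z. z \<in> ball 0 a \<Longrightarrow> f z \<le> 0"
    and m: "m < 0" and real_le: "\<And>x. x \<in> ball 0 1 \<inter> real_points \<Longrightarrow> f x \<le> m"
    and z: "z \<in> ball 0 1"
  shows "f z \<le> m * (1/2 - hmeasure (\<i> * of_real s))"
proof -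
  obtain b v :: "real^'n" and p where bv: "b \<bullet> v = 0" "(norm b)\<^sup>2 + (norm v)\<^sup>2 = 1" "v \<noteq> 0"
    and p: "of_real_vec b + p *s of_real_vec v = z" "cmod p < 1" "0 \<le> Im p"
    using complex_line_through_point[OF z] by blast
  define L where "L \<xi> = of_real_vec b + \<xi> *s of_real_vec v" for \<xi>
  have L_ball: "L \<xi> \<in> ball 0 r" if "1 \<le> r" "cmod \<xi> < r" for \<xi> r
    unfolding L_def using orthonormal_line_in_ball[OF bv] that by blast
  have "f (L p) \<le> m * (1/2 - hmeasure (\<i> * of_real s))"
  proof (rule two_constant_upper_half_disc[OF s _ _ _ m _ p(2,3)])
    have L_ball_a: "L \<xi> \<in> ball 0 a" if "\<xi> \<in> ball 0 a" for \<xi>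
      using L_ball[of a \<xi>] s that by simp
    have "continuous_on (ball 0 a) L"
      unfolding L_def vector_scalar_mult_def by (intro continuous_intros continuous_on_vec_lambda)
    then show "continuous_on (ball 0 a) (\<lambda>\<xi>. f (L \<xi>))"
      using psh L_ball_a unfolding cont_psh_on_def by (blast intro: continuous_on_compose2)
    show "f (L \<xi>) \<le> 0" if "\<xi> \<in> ball 0 a" for \<xi>
      using nonpos L_ball_a that by blast
    show "f (L \<xi>) \<le> circle_mean (\<lambda>\<xi>. f (L \<xi>)) \<xi> r" if "0 < r" "cball \<xi> r \<subseteq> ball 0 a" for \<xi> r
      using L_ball_a unfolding L_def by (rule cont_psh_on_line_circle_mean[OF psh _ that])
    show "f (L (of_real t)) \<le> m" if "\<bar>t\<bar> < 1" for t
    proof (rule real_le)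
      have "L (of_real t) \<in> ball 0 1" using L_ball[of 1 "of_real t"] that by simp
      moreover have "L (of_real t) \<in> real_points"
        by (simp add: L_def real_points_def of_real_vec_def)
      ultimately show "L (of_real t) \<in> ball 0 1 \<inter> real_points" by blast
    qed
  qed
  then show ?thesis using p(1) by (simp add: L_def)
qed

lemma R_familyD:
  assumes "f \<in> R_family c a"
  shows "cont_psh_on (ball 0 a) f" "\<And>z. z \<in> ball 0 a \<Longrightarrow> f z \<le> 0"
    "\<exists>z\<in>ball 0 1. - c * ln a - 1 < f z"
proof -
  show "cont_psh_on (ball 0 a) f" using assms by (simp add: R_family_def)
  show "f z \<le> 0" if "z \<in> ball 0 a" for z
    using assms SUP_upper[OF that, of "\<lambda>z. ereal (f z)"] by (simp add: R_family_def)
  have "ereal (- c * ln a - 1) < ereal (- c * ln a)" by simp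
  also have "\<dots> \<le> (SUP z\<in>ball 0 1. ereal (f z))"
    using assms by (simp add: R_family_def)
  finally
  show "\<exists>z\<in>ball 0 1. - c * ln a - 1 < f z" by (simp add: less_SUP_iff)
qed

theorem lemma2p7:
  fixes a c :: real
  assumes "a > 1" and "c > 0"
  shows "\<exists>C>0. \<forall>f \<in> (R_family c a :: (complex^'n \<Rightarrow> real) set).
           (SUP x\<in>ball 0 1 \<inter> real_points. ereal (f x)) \<ge> ereal (- C)"
proof (intro exI conjI ballI)
  define s where "s = (1 + a) / 2"
  define \<kappa> where "\<kappa> = hmeasure (\<i> * of_real s)"
  have s: "1 < s" "s < a" using assms by (auto simp: s_def)
  have \<kappa>: "\<kappa> < 1/2" using hmeasure_imaginary_axis_bounds[OF s(1)] by (simp add: \<kappa>_def)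
  define C where "C = (c * ln a + 1) / (1/2 - \<kappa>)"
  show "C > 0" using assms \<kappa> by (simp add: C_def add_pos_pos)
  fix f :: "complex^'n \<Rightarrow> real" assume f: "f \<in> R_family c a"
  obtain z where z: "z \<in> ball 0 1" "- c * ln a - 1 < f z" using R_familyD(3)[OF f] by blast
  have "\<exists>x\<in>ball 0 1 \<inter> real_points. - C < f x"
  proof (rule ccontr)
    assume "\<not> ?thesis"
    then have "f z \<le> - C * (1/2 - hmeasure (\<i> * of_real s))"
      using \<open>C > 0\<close> by (intro cont_psh_two_constant[OF s R_familyD(1,2)[OF f] _ _ z(1)])
        (auto simp: not_less)
    with z(2) \<kappa> show False by (simp add: C_def \<kappa>_def)
  qed
  then obtain x where "x \<in> ball 0 1 \<inter> real_points" "- C < f x" by blast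
  then show "ereal (- C) \<le> (SUP x\<in>ball 0 1 \<inter> real_points. ereal (f x))"
    by (intro SUP_upper2[of x]) auto
qed

end
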